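(* For all $n\in\mathbb{N}$, $D_n\equiv 1\pmod 3$.
   Context: For $n\in\mathbb{N}$, the Domb numbers are $D_n=\sum_{k=0}^n\binom{n}{k}^2\binom{2k}{k}\binom{2(n-k)}{n-k}$. *)

theory Defs
  imports Main "HOL-Number_Theory.Cong"
begin

definition domb :: "nat \<Rightarrow> nat" where
  "domb n = (\<Sum>k = 0..n. (n choose k)^2 * ((2*k) choose k) * ((2*(n-k)) choose (n-k)))"

end

theory Submission
  imports Defs
begin

text \<open>
  For a prime \<open>p\<close> and digits \<open>r, s < p\<close>, Lucas' congruence
  \<open>C(pm+r, pj+s) \<equiv> C(m,j) C(r,s)\<close> and its consequence
  \<open>C(2a,a) \<equiv> C(2b,b) C(2t,t)\<close> for \<open>a = pb+t\<close> make every summand of the Domb number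
  \<open>D(pm+r)\<close> factor modulo \<open>p\<close> into a summand of \<open>D(m)\<close> times one of \<open>D(r)\<close>;
  hence \<open>D(pm+r) \<equiv> D(m) D(r) (mod p)\<close>. For \<open>p = 3\<close> the base values
  \<open>D(0) = 1\<close>, \<open>D(1) = 4\<close>, \<open>D(2) = 28\<close> are all \<open>\<equiv> 1\<close>, so induction on the
  base-3 digits of \<open>n\<close> gives \<open>D(n) \<equiv> 1 (mod 3)\<close>.
\<close>

lemma prime_dvd_choose:
  fixes p n k :: nat
  assumes "prime p" and "k < p" and "n - k < p" and "p \<le> n"
  shows "p dvd (n choose k)"
proof -
  have "p dvd fact n" using assms by (simp add: prime_dvd_fact_iff)
  moreover have "fact n = fact k * fact (n - k) * (n choose k)"
    using binomial_fact_lemma[of k n] assms by simp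
  moreover have "\<not> p dvd fact k * fact (n - k)"
    using assms by (simp add: prime_dvd_mult_iff prime_dvd_fact_iff)
  ultimately show ?thesis using assms(1) by (metis prime_dvd_mult_iff)
qed

lemma Suc_div_mod_digits:
  fixes p m r :: nat
  assumes "r < p"
  shows "Suc (p * m + r) div p = (if Suc r = p then Suc m else m)"
    and "Suc (p * m + r) mod p = (if Suc r = p then 0 else Suc r)"
  using assms by (auto simp: div_Suc mod_Suc)

lemma lucas_pascal_step:
  fixes p m r j s :: nat
  assumes p: "prime p" and r: "r < p" and s: "s < p"
  defines "n' \<equiv> Suc (p * m + r)" and "k' \<equiv> Suc (p * j + s)"
  shows "[(m choose j) * (r choose s) + (m choose (k' div p)) * (r choose (k' mod p))
          = (n' div p choose (k' div p)) * (n' mod p choose (k' mod p))] (mod p)"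
proof -
  have n': "n' div p = (if Suc r = p then Suc m else m)" "n' mod p = (if Suc r = p then 0 else Suc r)"
    and k': "k' div p = (if Suc s = p then Suc j else j)" "k' mod p = (if Suc s = p then 0 else Suc s)"
    using r s by (simp_all add: n'_def k'_def Suc_div_mod_digits)
  consider "Suc r = p" "Suc s = p" | "Suc r \<noteq> p" "Suc s = p" | "Suc r = p" "Suc s \<noteq> p" | "Suc r \<noteq> p" "Suc s \<noteq> p"
    by blast
  then show ?thesis
  proof cases
    case 1
    then have "r choose s = 1" by (metis Suc_inject binomial_n_n)
    with 1 show ?thesis by (simp add: n' k')
  next
    case 2
    then have "r choose s = 0" using r by (simp add: binomial_eq_0)
    with 2 show ?thesis by (simp add: n' k' del: binomial_eq_0_iff)
  next
    case 3
    have "(m choose j) * (r choose s) + (m choose j) * (r choose Suc s) = (m choose j) * (p choose Suc s)"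
      using 3 by (simp flip: 3(1) add: distrib_left)
    moreover have "p dvd (p choose Suc s)"
      using 3 s by (intro prime_dvd_choose[OF p]) auto
    ultimately show ?thesis using 3 by (simp add: n' k' cong_0_iff)
  next
    case 4
    then show ?thesis by (simp add: n' k' distrib_left)
  qed
qed

lemma lucas_congruence:
  fixes p n k :: nat
  assumes "prime p"
  shows "[n choose k = (n div p choose (k div p)) * (n mod p choose (k mod p))] (mod p)"
proof (induction n arbitrary: k)
  case 0
  show ?case
  proof (cases "k = 0")
    case False
    then have "k div p \<noteq> 0 \<or> k mod p \<noteq> 0"
      by (metis div_mult_mod_eq mult_0 add_0)
    then show ?thesis using False by (auto simp: binomial_eq_0)
  qed simp
next
  case (Suc n)
  show ?case
  proof (cases k)
    case 0
    then show ?thesis by simp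
  next
    case (Suc k')
    define m r j s where "m = n div p" "r = n mod p" "j = k' div p" "s = k' mod p"
    have "p > 1" using assms prime_gt_1_nat by blast
    then have digits: "n = p * m + r" "r < p" "k' = p * j + s" "s < p"
      by (simp_all add: m_r_j_s_def)
    have "[Suc n choose k = (m choose j) * (r choose s) + (m choose (k div p)) * (r choose (k mod p))] (mod p)"
      using Suc.IH[of k'] Suc.IH[of "Suc k'"] \<open>k = Suc k'\<close> by (simp add: m_r_j_s_def cong_add)
    also have "[(m choose j) * (r choose s) + (m choose (k div p)) * (r choose (k mod p))
        = (Suc n div p choose (k div p)) * (Suc n mod p choose (k mod p))] (mod p)"
      using lucas_pascal_step[OF assms digits(2,4), of m j]
      by (simp only: digits(1,3) \<open>k = Suc k'\<close>)
    finally show ?thesis .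
  qed
qed

lemma central_binomial_lucas:
  fixes p a :: nat
  assumes p: "prime p"
  shows "[(2 * a) choose a = (2 * (a div p) choose (a div p)) * (2 * (a mod p) choose (a mod p))] (mod p)"
proof -
  define b t where "b = a div p" "t = a mod p"
  have "p > 0" using p prime_gt_0_nat by blast
  then have a: "a = p * b + t" "t < p" by (simp_all add: b_t_def)
  have lucas: "[(2 * a) choose a = ((2 * a) div p choose b) * ((2 * a) mod p choose t)] (mod p)"
    using lucas_congruence[OF p, of "2 * a" a] by (simp add: b_t_def)
  show ?thesis
  proof (cases "2 * t < p")
    case True
    have "2 * a = p * (2 * b) + 2 * t" using a by simp
    then have "(2 * a) div p = 2 * b" "(2 * a) mod p = 2 * t" using True by simp_all
    with lucas show ?thesis by (simp add: b_t_def)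
  next
    case False
    \<comment> \<open>the digit \<open>t\<close> carries when doubled, and then both sides vanish mod \<open>p\<close>\<close>
    have two_a: "2 * a = (2 * t - p) + p * (2 * b + 1)" using a False by simp
    have "2 * t - p < p" using a by simp
    then have "(2 * a) mod p = 2 * t - p" unfolding two_a mod_mult_self2 by simp
    moreover have "2 * t - p < t" using a False by arith
    ultimately have zero: "(2 * a) mod p choose t = 0" by (simp add: binomial_eq_0)
    have "p dvd (2 * t choose t)"
      using False a by (intro prime_dvd_choose[OF p]) auto
    then have "[(2 * b choose b) * (2 * t choose t) = 0] (mod p)" by (simp add: cong_0_iff)
    moreover have "[(2 * a) choose a = 0] (mod p)" using lucas unfolding zero by simp
    ultimately show ?thesis unfolding b_t_def[symmetric] by (metis cong_sym cong_trans)
  qed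
qed

definition domb_term :: "nat \<Rightarrow> nat \<Rightarrow> nat" where
  "domb_term n k = (n choose k)^2 * ((2 * k) choose k) * ((2 * (n - k)) choose (n - k))"

lemma domb_term_lucas:
  fixes p m r j s :: nat
  assumes p: "prime p" and "r < p" and "s < p"
  shows "[domb_term (p * m + r) (p * j + s) = domb_term m j * domb_term r s] (mod p)"
proof -
  have choose: "[(p * m + r) choose (p * j + s) = (m choose j) * (r choose s)] (mod p)"
    using lucas_congruence[OF p, of "p * m + r" "p * j + s"] assms by simp
  have central: "[2 * (p * j + s) choose (p * j + s) = (2 * j choose j) * (2 * s choose s)] (mod p)"
    using central_binomial_lucas[OF p, of "p * j + s"] assms by simp
  show ?thesis
  proof (cases "j \<le> m \<and> s \<le> r")
    case True
    then have diff: "p * m + r - (p * j + s) = p * (m - j) + (r - s)"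
      by (simp add: diff_mult_distrib2)
    have "[2 * (p * (m - j) + (r - s)) choose (p * (m - j) + (r - s))
          = (2 * (m - j) choose (m - j)) * (2 * (r - s) choose (r - s))] (mod p)"
      using central_binomial_lucas[OF p, of "p * (m - j) + (r - s)"] assms by simp
    then have "[domb_term (p * m + r) (p * j + s)
        = ((m choose j) * (r choose s))^2 * ((2 * j choose j) * (2 * s choose s))
          * ((2 * (m - j) choose (m - j)) * (2 * (r - s) choose (r - s)))] (mod p)"
      unfolding domb_term_def diff by (intro cong_mult cong_pow choose central)
    then show ?thesis by (simp add: domb_term_def power_mult_distrib mult_ac)
  next
    case False
    then have zero: "(m choose j) * (r choose s) = 0"
      by (auto simp: binomial_eq_0)
    have "[domb_term (p * m + r) (p * j + s)
        = ((m choose j) * (r choose s))^2 * (2 * (p * j + s) choose (p * j + s))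
          * (2 * (p * m + r - (p * j + s)) choose (p * m + r - (p * j + s)))] (mod p)"
      unfolding domb_term_def by (intro cong_mult cong_pow choose cong_refl)
    then have "[domb_term (p * m + r) (p * j + s) = 0] (mod p)"
      unfolding zero by simp
    moreover have "domb_term m j * domb_term r s = 0"
      using False by (auto simp: domb_term_def binomial_eq_0)
    ultimately show ?thesis by (simp only:)
  qed
qed

lemma sum_lessThan_mult_digits:
  fixes f :: "nat \<Rightarrow> 'a::comm_monoid_add"
  shows "(\<Sum>k < p * M. f k) = (\<Sum>j < M. \<Sum>s < p. f (p * j + s))"
proof (induction M)
  case (Suc M)
  have "(\<Sum>k < p * Suc M. f k) = (\<Sum>k < p * M. f k) + (\<Sum>k = p * M..<p * M + p. f k)"
    using sum.atLeastLessThan_concat[of 0 "p * M" "p * M + p" f] by (simp add: lessThan_atLeast0 add.commute)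
  also have "(\<Sum>k = p * M..<p * M + p. f k) = (\<Sum>s < p. f (p * M + s))"
    using sum.atLeastLessThan_shift_0[of f "p * M" "p * M + p"] by (simp add: lessThan_atLeast0 comp_def)
  finally show ?case using Suc.IH by simp
qed simp

lemma domb_eq_sum_lessThan:
  assumes "n < N"
  shows "domb n = (\<Sum>k < N. domb_term n k)"
proof -
  have "domb n = (\<Sum>k \<le> n. domb_term n k)"
    unfolding domb_def domb_term_def atLeast0AtMost ..
  also have "\<dots> = (\<Sum>k < N. domb_term n k)"
    using assms by (intro sum.mono_neutral_left) (auto simp: domb_term_def binomial_eq_0)
  finally show ?thesis .
qed

lemma domb_lucas:
  fixes p m r :: nat
  assumes p: "prime p" and r: "r < p"
  shows "[domb (p * m + r) = domb m * domb r] (mod p)"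
proof -
  have "domb (p * m + r) = (\<Sum>k < p * Suc m. domb_term (p * m + r) k)"
    by (rule domb_eq_sum_lessThan) (use r in simp)
  also have "\<dots> = (\<Sum>j < Suc m. \<Sum>s < p. domb_term (p * m + r) (p * j + s))"
    by (rule sum_lessThan_mult_digits)
  also have "[\<dots> = (\<Sum>j < Suc m. \<Sum>s < p. domb_term m j * domb_term r s)] (mod p)"
    using domb_term_lucas[OF p r] by (intro cong_sum) simp
  also have "(\<Sum>j < Suc m. \<Sum>s < p. domb_term m j * domb_term r s)
      = (\<Sum>j < Suc m. domb_term m j) * (\<Sum>s < p. domb_term r s)"
    by (rule sum_product[symmetric])
  also have "\<dots> = domb m * domb r"
    by (simp only: domb_eq_sum_lessThan[OF lessI, of m] domb_eq_sum_lessThan[OF r])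
  finally show ?thesis .
qed

theorem lemma3p3:
  fixes n :: nat
  shows "[domb n = 1] (mod 3)"
proof (induction n rule: less_induct)
  case (less n)
  have digit: "[domb r = 1] (mod 3)" if "r < 3" for r :: nat
  proof -
    have "domb 0 = 1" "domb 1 = 4" "domb 2 = 28"
      by (simp_all add: domb_def numeral_2_eq_2 atLeast0_atMost_Suc)
    moreover have "r = 0 \<or> r = 1 \<or> r = 2" using that by auto
    ultimately show ?thesis by (auto simp: cong_def)
  qed
  show ?case
  proof (cases "n < 3")
    case False
    have "[domb n = domb (n div 3) * domb (n mod 3)] (mod 3)"
      using domb_lucas[of 3 "n mod 3" "n div 3"] by simp
    also have "[domb (n div 3) * domb (n mod 3) = 1 * 1] (mod 3)"
      using False by (intro cong_mult less.IH digit) simp_all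
    finally show ?thesis by simp
  qed (rule digit)
qed

end
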